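(* Let $n\geq 4$ be even, $N=n/2$, and let $\mathcal{D}\leq\mathbb{F}_2^n$ be a semi self-dual code that is not doubly-even. Let $A(x,y)=\sum_{c\in\mathcal{D}}x^{n-\mathrm{wt}(c)}y^{\mathrm{wt}(c)}$, $D(x,y)=A\big(\tfrac{x+y}{\sqrt2},\tfrac{x-y}{\sqrt2}\big)$ and $B(x,y)=A(x,y)-D(x,y)$. Then there are unique complex numbers $e_0,\dots,e_{\lfloor (N-2)/4\rfloor}$ with $$B(x,y)=(x^4-6x^2y^2+y^4)\sum_{i=0}^{\lfloor (N-2)/4\rfloor}e_i\,(x^2+y^2)^{N-2-4i}\big(x^2y^2(x^2-y^2)^2\big)^i,$$ and for every $i$ the number $\epsilon_i:=(-1)^i2^{N-1-6i}e_i$ is a non-negative integer.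
   Context: A binary linear code $\mathcal{D}\leq\mathbb{F}_2^n$ is called semi self-dual if $\mathcal{D}\subseteq\mathcal{D}^\perp$ (standard inner product), the all-ones vector lies in $\mathcal{D}$, and $\dim(\mathcal{D}^\perp/\mathcal{D})=2$. $\mathcal{D}$ is doubly-even if every codeword has weight divisible by $4$; $\mathrm{wt}(c)$ is the Hamming weight. *)

theory Defs
  imports Complex_Main
begin

text \<open>Vectors of F_2^n are represented by their supports, i.e. subsets of {..<n}.
  Addition is symmetric difference, weight is cardinality, and the standard
  inner product of u and v is the parity of card (u \<inter> v).\<close>

definition binary_linear_code :: "nat \<Rightarrow> nat set set \<Rightarrow> bool" where
  "binary_linear_code n C \<longleftrightarrow> C \<subseteq> Pow {..<n} \<and> {} \<in> C \<and>
     (\<forall>a\<in>C. \<forall>b\<in>C. (a - b) \<union> (b - a) \<in> C)"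

definition dual_code :: "nat \<Rightarrow> nat set set \<Rightarrow> nat set set" where
  "dual_code n C = {v. v \<subseteq> {..<n} \<and> (\<forall>c\<in>C. even (card (v \<inter> c)))}"

text \<open>dim(D^perp / D) = 2 over F_2 means |D^perp| = 4 |D| (given D \<subseteq> D^perp).\<close>
definition semi_self_dual :: "nat \<Rightarrow> nat set set \<Rightarrow> bool" where
  "semi_self_dual n C \<longleftrightarrow> binary_linear_code n C \<and> C \<subseteq> dual_code n C \<and>
     {..<n} \<in> C \<and> card (dual_code n C) = 4 * card C"

definition doubly_even :: "nat set set \<Rightarrow> bool" where
  "doubly_even C \<longleftrightarrow> (\<forall>c\<in>C. 4 dvd card c)"

definition weight_enum :: "nat \<Rightarrow> nat set set \<Rightarrow> complex \<Rightarrow> complex \<Rightarrow> complex" where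
  "weight_enum n C x y = (\<Sum>c\<in>C. x ^ (n - card c) * y ^ card c)"

end

theory Submission
  imports Defs
begin

(* Substitute x = (a + b)/\<surd>2 and y = \<i>(a - b)/\<surd>2. Both weight enumerators appearing in B then
   become character sums over F_2^n, and orthogonality of characters (the MacWilliams argument)
   collapses B onto the shadow S of C:
     B = \<Sum> { a^(n - wt v) b^(wt v) | v \<in> S, wt v \<equiv> N + 2 (mod 4) }.
   Complementation pairs these vectors, and each pair a^(n-w) b^w + a^w b^(n-w) equals
   (ab)^w (a^(4(2l+1)) + b^(4(2l+1))), i.e. (a^4 + b^4) (ab)^w times a polynomial with natural
   coefficients in a^4 b^4 and (a^4 - b^4)^2. Back in x, y these are the basis elements of the
   statement, rescaled by (-1)^i 2^(N-1-6i); this gives existence and \<epsilon>_i \<in> \<nat>.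
   Uniqueness holds because the basis elements are linearly independent as functions. *)

lemma card_sym_diff_add_card_Int:
  assumes "finite c" "finite d"
  shows "card (sym_diff c d) + 2 * card (c \<inter> d) = card c + card d"
proof -
  have "card (sym_diff c d) = card (c - d) + card (d - c)"
    by (rule card_Un_disjoint) (use assms in auto)
  then show ?thesis
    using card_Int_Diff[OF assms(1), of d] card_Int_Diff[OF assms(2), of c] by (simp add: Int_commute)
qed

lemma power_card_sym_diff:
  fixes z :: "'a::comm_monoid_mult"
  assumes "finite c" "finite d" "z ^ (2 * card (c \<inter> d)) = 1"
  shows "z ^ card (sym_diff c d) = z ^ card c * z ^ card d"
  using arg_cong[OF card_sym_diff_add_card_Int[OF assms(1,2)], of "power z"] assms(3)
  by (simp add: power_add)

lemma sum_multiplicative_sym_diff: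
  fixes \<phi> :: "'a set \<Rightarrow> 'b::idom"
  assumes "finite C" and closed: "\<And>c d. c \<in> C \<Longrightarrow> d \<in> C \<Longrightarrow> sym_diff c d \<in> C"
    and mult: "\<And>c d. c \<in> C \<Longrightarrow> d \<in> C \<Longrightarrow> \<phi> (sym_diff c d) = \<phi> c * \<phi> d"
  shows "(\<Sum>c\<in>C. \<phi> c) = (if \<forall>c\<in>C. \<phi> c = 1 then of_nat (card C) else 0)"
proof (cases "\<forall>c\<in>C. \<phi> c = 1")
  case False
  then obtain d where d: "d \<in> C" "\<phi> d \<noteq> 1" by auto
  have "bij_betw (\<lambda>c. sym_diff c d) C C"
    by (rule bij_betw_byWitness[where f' = "\<lambda>c. sym_diff c d"]) (use closed d in auto)
  then have "(\<Sum>c\<in>C. \<phi> c) = (\<Sum>c\<in>C. \<phi> (sym_diff c d))"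
    using sum.reindex_bij_betw by metis
  also have "\<dots> = \<phi> d * (\<Sum>c\<in>C. \<phi> c)"
    by (simp add: sum_distrib_left mult d mult.commute)
  finally have "(1 - \<phi> d) * (\<Sum>c\<in>C. \<phi> c) = 0" by (simp add: algebra_simps)
  with d False show ?thesis by auto
qed simp

lemma prod_if_mem:
  assumes "finite I"
  shows "(\<Prod>j\<in>I. if j \<in> c then p else q) = p ^ card (I \<inter> c) * q ^ card (I - c)"
  using assms by (simp add: prod.If_cases Diff_eq)

lemma power_card_expand:
  fixes u w a b \<sigma> :: "'a::comm_ring_1"
  assumes "finite I" "c \<subseteq> I"
  shows "(u * (a + \<sigma> * b)) ^ (card I - card c) * (w * (a - \<sigma> * b)) ^ card c =
    u ^ (card I - card c) * w ^ card c *
    (\<Sum>v\<in>Pow I. a ^ (card I - card v) * (\<sigma> * b) ^ card v * (-1) ^ card (v \<inter> c))"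
proof -
  let ?sign = "\<lambda>j. if j \<in> c then -1 else 1 :: 'a"
  have card: "card (I \<inter> c) = card c" "card (I - c) = card I - card c"
    using assms by (simp_all add: Int_absorb1 card_Diff_subset rev_finite_subset)
  have "(u * (a + \<sigma> * b)) ^ (card I - card c) * (w * (a - \<sigma> * b)) ^ card c =
      (\<Prod>j\<in>I. if j \<in> c then w * (a - \<sigma> * b) else u * (a + \<sigma> * b))"
    by (simp add: prod_if_mem assms(1) card mult.commute)
  also have "\<dots> = (\<Prod>j\<in>I. (if j \<in> c then w else u) * (?sign j * (\<sigma> * b) + a))"
    by (intro prod.cong) (auto simp: algebra_simps)
  also have "\<dots> = u ^ (card I - card c) * w ^ card c *
      (\<Sum>v\<in>Pow I. (\<Prod>j\<in>v. ?sign j * (\<sigma> * b)) * (\<Prod>j\<in>I - v. a))"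
    by (simp add: prod.distrib prod_add prod_if_mem assms(1) card mult.commute)
  also have "(\<Sum>v\<in>Pow I. (\<Prod>j\<in>v. ?sign j * (\<sigma> * b)) * (\<Prod>j\<in>I - v. a)) =
      (\<Sum>v\<in>Pow I. a ^ (card I - card v) * (\<sigma> * b) ^ card v * (-1) ^ card (v \<inter> c))"
  proof (intro sum.cong refl)
    fix v assume "v \<in> Pow I"
    then have "finite v" "v \<subseteq> I" using assms(1) finite_subset by auto
    then show "(\<Prod>j\<in>v. ?sign j * (\<sigma> * b)) * (\<Prod>j\<in>I - v. a) =
        a ^ (card I - card v) * (\<sigma> * b) ^ card v * (-1) ^ card (v \<inter> c)"
      by (simp add: prod.distrib prod_if_mem card_Diff_subset power_mult_distrib mult_ac)
  qed
  finally show ?thesis .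
qed

lemma sum_complement_pairs:
  assumes "finite I" "V \<subseteq> Pow I" "\<And>v. v \<in> V \<Longrightarrow> I - v \<in> V"
    and "\<And>v. v \<in> V \<Longrightarrow> 2 * card v \<noteq> card I"
  shows "sum f V = (\<Sum>v\<in>{v \<in> V. 2 * card v < card I}. f v + f (I - v))"
proof -
  define V1 where "V1 = {v \<in> V. 2 * card v < card I}"
  have card_compl: "card (I - v) = card I - card v" if "v \<in> V" for v
    using that assms(1,2) by (simp add: card_Diff_subset rev_finite_subset subset_eq)
  have double_compl: "I - (I - v) = v" if "v \<in> V" for v
    using that assms(2) by auto
  have card_le: "card v \<le> card I" if "v \<in> V" for v
    using that assms(1,2) card_mono[of I v] by blast
  have image: "(\<lambda>v. I - v) ` V1 = V - V1"
  proof
    show "(\<lambda>v. I - v) ` V1 \<subseteq> V - V1"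
    proof
      fix w assume "w \<in> (\<lambda>v. I - v) ` V1"
      then obtain v where "v \<in> V" "2 * card v < card I" "w = I - v" unfolding V1_def by blast
      then show "w \<in> V - V1"
        using assms(3)[of v] card_compl[of v] unfolding V1_def by simp
    qed
    show "V - V1 \<subseteq> (\<lambda>v. I - v) ` V1"
    proof
      fix w assume w: "w \<in> V - V1"
      then have "2 * card w > card I" "w \<in> V"
        using assms(4)[of w] unfolding V1_def by auto
      then have "I - w \<in> V1"
        using assms(3)[of w] card_compl[of w] card_le[of w] unfolding V1_def by simp
      then show "w \<in> (\<lambda>v. I - v) ` V1"
        using double_compl[of w] w by (metis DiffD1 image_eqI)
    qed
  qed
  have inj: "inj_on (\<lambda>v. I - v) V1"
    by (rule inj_on_inverseI[where g = "\<lambda>v. I - v"]) (simp add: V1_def double_compl)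
  have "finite V" using assms(1,2) finite_subset by (metis finite_Pow_iff)
  then have "sum f V = sum f (V - V1) + sum f V1"
    by (intro sum.subset_diff) (auto simp: V1_def)
  also have "sum f (V - V1) = (\<Sum>v\<in>V1. f (I - v))"
    unfolding image[symmetric] using sum.reindex[OF inj, of f] by simp
  finally show ?thesis unfolding V1_def by (simp add: sum.distrib add.commute)
qed

lemma complement_weight_mod_4:
  fixes w u N :: nat
  assumes "w + u = 2 * N" "(w + 2) mod 4 = N mod 4"
  shows "(u + 2) mod 4 = N mod 4"
proof -
  obtain q1 q2 where "w + 2 + 4 * q1 = N + 4 * q2"
    using assms(2) nat_mod_eq_iff by blast
  with assms(1) have "u + 2 + 4 * q2 = N + 4 * (q1 + 1)" by presburger
  then show ?thesis unfolding nat_mod_eq_iff by blast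
qed

lemma weight_enum_linear_substitution:
  assumes "C \<subseteq> Pow {..<n}"
  shows "weight_enum n C (u * (a + \<sigma> * b)) (w * (a - \<sigma> * b)) =
    (\<Sum>v\<in>Pow {..<n}. a ^ (n - card v) * (\<sigma> * b) ^ card v *
       (\<Sum>c\<in>C. u ^ (n - card c) * w ^ card c * (-1) ^ card (v \<inter> c)))"
proof -
  have "weight_enum n C (u * (a + \<sigma> * b)) (w * (a - \<sigma> * b)) =
      (\<Sum>c\<in>C. \<Sum>v\<in>Pow {..<n}. u ^ (n - card c) * w ^ card c *
         (a ^ (n - card v) * (\<sigma> * b) ^ card v * (-1) ^ card (v \<inter> c)))"
    unfolding weight_enum_def using assms
    by (intro sum.cong refl) (auto simp: power_card_expand[of "{..<n}", simplified] sum_distrib_left)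
  also have "\<dots> = (\<Sum>v\<in>Pow {..<n}. a ^ (n - card v) * (\<sigma> * b) ^ card v *
       (\<Sum>c\<in>C. u ^ (n - card c) * w ^ card c * (-1) ^ card (v \<inter> c)))"
    by (subst sum.swap) (simp add: sum_distrib_left mult_ac)
  finally show ?thesis .
qed

lemma weight_enum_first_substitution:
  fixes s a b :: complex
  assumes "s * s = 2" "n = 2 * N" "C \<subseteq> Pow {..<n}"
  shows "weight_enum n C ((a + b) / s) (\<i> * (a - b) / s) =
    (\<Sum>v\<in>Pow {..<n}. a ^ (n - card v) * b ^ card v *
       (\<Sum>c\<in>C. \<i> ^ card c * (-1) ^ card (v \<inter> c))) / 2 ^ N"
proof -
  have coeff: "(1 / s) ^ (n - card c) * (\<i> / s) ^ card c = \<i> ^ card c / 2 ^ N" if "c \<in> C" for c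
  proof -
    have "card c \<le> n" using that assms(3) card_mono[of "{..<n}" c] by auto
    then have "s ^ n = s ^ (n - card c) * s ^ card c" by (simp flip: power_add)
    moreover have "s ^ n = 2 ^ N" using assms(1,2) by (simp add: power_mult power2_eq_square)
    ultimately show ?thesis by (simp add: power_divide)
  qed
  have "weight_enum n C ((a + b) / s) (\<i> * (a - b) / s) =
      weight_enum n C ((1 / s) * (a + 1 * b)) ((\<i> / s) * (a - 1 * b))"
    by simp
  also have "\<dots> = (\<Sum>v\<in>Pow {..<n}. a ^ (n - card v) * (1 * b) ^ card v *
       (\<Sum>c\<in>C. (1 / s) ^ (n - card c) * (\<i> / s) ^ card c * (-1) ^ card (v \<inter> c)))"
    by (rule weight_enum_linear_substitution[OF assms(3)])
  also have "\<dots> = (\<Sum>v\<in>Pow {..<n}. a ^ (n - card v) * b ^ card v *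
       (\<Sum>c\<in>C. \<i> ^ card c * (-1) ^ card (v \<inter> c) / 2 ^ N))"
    by (auto intro!: sum.cong simp: coeff)
  finally show ?thesis
    by (simp add: sum_divide_distrib[symmetric])
qed

lemma weight_enum_second_substitution:
  fixes s a b :: complex
  assumes "s * s = 2" "n = 2 * N" "C \<subseteq> Pow {..<n}" "\<forall>c\<in>C. even (card c)"
  defines "x \<equiv> (a + b) / s" and "y \<equiv> \<i> * (a - b) / s"
  shows "weight_enum n C ((x + y) / s) ((x - y) / s) =
    \<i> ^ N * (\<Sum>v\<in>Pow {..<n}. a ^ (n - card v) * (- \<i> * b) ^ card v *
       (\<Sum>c\<in>C. \<i> ^ card c * (-1) ^ card (v \<inter> c))) / 2 ^ N"
proof -
  have coeff: "((1 + \<i>) / 2) ^ (n - card c) * ((1 - \<i>) / 2) ^ card c = \<i> ^ N * \<i> ^ card c / 2 ^ N"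
    if "c \<in> C" for c
  proof -
    from that assms(4) have "even (card c)" by blast
    then obtain k where k: "card c = 2 * k" ..
    have "k \<le> N" using that k assms(2,3) card_mono[of "{..<n}" c] by auto
    then have "n - card c = 2 * (N - k)" "\<i> ^ N = \<i> ^ (N - k) * \<i> ^ k"
      "(2::complex) ^ N = 2 ^ (N - k) * 2 ^ k"
      using k assms(2) by (simp_all flip: power_add)
    moreover have "((1 + \<i>) / 2) ^ 2 = \<i> / 2" "((1 - \<i>) / 2) ^ 2 = (-1) * (\<i> / 2)"
      by (simp_all add: power2_eq_square field_simps)
    ultimately show ?thesis
      unfolding k by (simp only: power_mult power_mult_distrib i_even_power power_divide) simp
  qed
  have "(x + y) / s = ((a + b) + \<i> * (a - b)) / (s * s)" "(x - y) / s = ((a + b) - \<i> * (a - b)) / (s * s)"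
    unfolding x_def y_def by (simp_all add: add_divide_distrib diff_divide_distrib)
  then have xy: "(x + y) / s = ((1 + \<i>) / 2) * (a + (- \<i>) * b)"
    "(x - y) / s = ((1 - \<i>) / 2) * (a - (- \<i>) * b)"
    unfolding assms(1) by (simp_all add: field_simps)
  have "weight_enum n C ((x + y) / s) ((x - y) / s) =
      (\<Sum>v\<in>Pow {..<n}. a ^ (n - card v) * (- \<i> * b) ^ card v *
       (\<Sum>c\<in>C. ((1 + \<i>) / 2) ^ (n - card c) * ((1 - \<i>) / 2) ^ card c * (-1) ^ card (v \<inter> c)))"
    unfolding xy by (rule weight_enum_linear_substitution[OF assms(3)])
  also have "\<dots> = (\<Sum>v\<in>Pow {..<n}. a ^ (n - card v) * (- \<i> * b) ^ card v *
       (\<Sum>c\<in>C. \<i> ^ N * (\<i> ^ card c * (-1) ^ card (v \<inter> c)) / 2 ^ N))"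
    by (auto intro!: sum.cong simp: coeff)
  finally show ?thesis
    by (simp add: sum_divide_distrib[symmetric] sum_distrib_left[symmetric] mult_ac)
qed

lemma card_mult_card_dual_code:
  assumes "binary_linear_code n C"
  shows "card C * card (dual_code n C) = 2 ^ n"
proof -
  have C: "C \<subseteq> Pow {..<n}" "{} \<in> C" and closed: "\<And>c d. c \<in> C \<Longrightarrow> d \<in> C \<Longrightarrow> sym_diff c d \<in> C"
    using assms unfolding binary_linear_code_def by auto
  then have "finite C" using finite_subset by blast
  have fin: "c \<in> C \<Longrightarrow> finite c" for c using C(1) finite_subset by blast
  have inner: "(\<Sum>c\<in>C. (-1::complex) ^ card (v \<inter> c)) = (if v \<in> dual_code n C then of_nat (card C) else 0)"
    if "v \<subseteq> {..<n}" for v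
  proof -
    have "v \<inter> sym_diff c d = sym_diff (v \<inter> c) (v \<inter> d)" for c d by blast
    then have "(\<Sum>c\<in>C. (-1::complex) ^ card (v \<inter> c)) =
        (if \<forall>c\<in>C. (-1::complex) ^ card (v \<inter> c) = 1 then of_nat (card C) else 0)"
      using \<open>finite C\<close> closed fin
      by (intro sum_multiplicative_sym_diff) (simp_all add: power_card_sym_diff power_mult)
    with that show ?thesis unfolding dual_code_def by (auto simp: minus_one_power_iff)
  qed
  have "dual_code n C \<subseteq> Pow {..<n}" unfolding dual_code_def by auto
  then have "of_nat (card C * card (dual_code n C)) =
      (\<Sum>v\<in>Pow {..<n}. if v \<in> dual_code n C then of_nat (card C) else (0::complex))"
    by (simp add: sum.If_cases Int_absorb1)
  also have "\<dots> = (\<Sum>v\<in>Pow {..<n}. \<Sum>c\<in>C. (-1) ^ card (v \<inter> c))"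
    by (intro sum.cong) (auto simp: inner)
  also have "\<dots> = (\<Sum>c\<in>C. \<Sum>v\<in>Pow {..<n}. (-1) ^ card (v \<inter> c))"
    by (rule sum.swap)
  also have "\<dots> = (\<Sum>c\<in>C. 2 ^ (n - card c) * 0 ^ card c)"
    using power_card_expand[of "{..<n}" _ "1::complex" 1 1 1 1] C(1) by (auto intro!: sum.cong)
  also have "\<dots> = (\<Sum>c\<in>C. if c = {} then 2 ^ n else 0)"
    using fin by (intro sum.cong) (auto simp: power_0_left)
  also have "\<dots> = 2 ^ n"
    using \<open>finite C\<close> C(2) by simp
  finally show ?thesis by (metis of_nat_eq_of_nat_power_cancel_iff of_nat_numeral)
qed

lemma semi_self_dual_card:
  assumes "semi_self_dual n C" "n = 2 * N"
  shows "2 * card C = 2 ^ N"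
proof -
  have "(2 * card C) ^ 2 = card C * (4 * card C)"
    by (simp add: power2_eq_square)
  also have "\<dots> = 2 ^ n"
    using assms(1) card_mult_card_dual_code unfolding semi_self_dual_def by metis
  also have "\<dots> = (2 ^ N) ^ 2"
    using assms(2) by (simp add: power_mult mult.commute)
  finally show ?thesis
    by (rule power_eq_imp_eq_base) simp_all
qed

lemma self_orthogonal_even_card:
  assumes "C \<subseteq> dual_code n C" "c \<in> C"
  shows "even (card c)"
  using assms unfolding dual_code_def by (metis (no_types, lifting) Int_absorb mem_Collect_eq subsetD)

(* The shadow of a self-orthogonal code; for v in it, c \<mapsto> \<i>^wt(c) (-1)^<v,c> is the trivial
   character of C, see shadow_character_sum. *)
definition shadow :: "nat \<Rightarrow> nat set set \<Rightarrow> nat set set" where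
  "shadow n C = {v. v \<subseteq> {..<n} \<and> (\<forall>c\<in>C. even (card (v \<inter> c) + card c div 2))}"

lemma shadow_character_sum:
  assumes "binary_linear_code n C" "C \<subseteq> dual_code n C" "v \<subseteq> {..<n}"
  shows "(\<Sum>c\<in>C. \<i> ^ card c * (-1) ^ card (v \<inter> c)) =
    (if v \<in> shadow n C then of_nat (card C) else 0)"
proof -
  have C: "C \<subseteq> Pow {..<n}" and closed: "\<And>c d. c \<in> C \<Longrightarrow> d \<in> C \<Longrightarrow> sym_diff c d \<in> C"
    using assms(1) unfolding binary_linear_code_def by auto
  then have "finite C" using finite_subset by blast
  have fin: "c \<in> C \<Longrightarrow> finite c" for c using C finite_subset by blast
  have orth: "c \<in> C \<Longrightarrow> d \<in> C \<Longrightarrow> even (card (c \<inter> d))" for c d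
    using assms(2) unfolding dual_code_def by auto
  have mult: "\<i> ^ card (sym_diff c d) * (-1) ^ card (v \<inter> sym_diff c d) =
      \<i> ^ card c * (-1) ^ card (v \<inter> c) * (\<i> ^ card d * (-1) ^ card (v \<inter> d))"
    if "c \<in> C" "d \<in> C" for c d
  proof -
    have "\<i> ^ (2 * card (c \<inter> d)) = 1" using orth[OF that] by (auto simp: power_mult)
    then have "\<i> ^ card (sym_diff c d) = \<i> ^ card c * \<i> ^ card d"
      using that fin by (simp add: power_card_sym_diff)
    moreover have "v \<inter> sym_diff c d = sym_diff (v \<inter> c) (v \<inter> d)" by blast
    then have "(-1::complex) ^ card (v \<inter> sym_diff c d) = (-1) ^ card (v \<inter> c) * (-1) ^ card (v \<inter> d)"
      using that fin by (simp add: power_card_sym_diff power_mult)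
    ultimately show ?thesis by (simp add: mult_ac)
  qed
  have "(\<Sum>c\<in>C. \<i> ^ card c * (-1) ^ card (v \<inter> c)) =
      (if \<forall>c\<in>C. \<i> ^ card c * (-1) ^ card (v \<inter> c) = 1 then of_nat (card C) else 0)"
    by (rule sum_multiplicative_sym_diff[where \<phi> = "\<lambda>c. \<i> ^ card c * (-1) ^ card (v \<inter> c)",
          OF \<open>finite C\<close> closed mult])
  moreover have "\<i> ^ card c * (-1) ^ card (v \<inter> c) = 1 \<longleftrightarrow> even (card (v \<inter> c) + card c div 2)"
    if "c \<in> C" for c
    using orth[OF that that] by (simp add: minus_one_power_iff)
  ultimately show ?thesis
    using assms(3) unfolding shadow_def by auto
qed

lemma shadow_complement:
  assumes "C \<subseteq> Pow {..<n}" "\<And>c. c \<in> C \<Longrightarrow> even (card c)" "v \<in> shadow n C"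
  shows "{..<n} - v \<in> shadow n C"
  unfolding shadow_def
proof (intro CollectI conjI ballI)
  fix c assume c: "c \<in> C"
  then have "({..<n} - v) \<inter> c = c - v" "finite c" using assms(1) finite_subset by auto
  then have "card (({..<n} - v) \<inter> c) + card (v \<inter> c) = card c"
    using card_Int_Diff[of c v] by (simp add: Int_commute)
  then have "even (card (({..<n} - v) \<inter> c) + card (v \<inter> c))"
    using assms(2) c by simp
  moreover have "even (card (v \<inter> c) + card c div 2)"
    using assms(3) c unfolding shadow_def by auto
  ultimately show "even (card (({..<n} - v) \<inter> c) + card c div 2)" by (simp add: even_add)
qed simp

lemma one_minus_power_i:
  assumes "even (N + k)"
  shows "1 - \<i> ^ N * (- \<i>) ^ k = (if (k + 2) mod 4 = N mod 4 then 2 else 0)"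
proof -
  have "even (N + 3 * k)" using assms by simp
  then obtain j where j: "N + 3 * k = 2 * j" by blast
  have "- \<i> = \<i> ^ 3" by (simp add: eval_nat_numeral)
  then have "\<i> ^ N * (- \<i>) ^ k = \<i> ^ (N + 3 * k)"
    by (simp add: power_add power_mult)
  also have "\<dots> = (-1) ^ j" unfolding j by (simp add: power_mult)
  finally have "\<i> ^ N * (- \<i>) ^ k = (-1) ^ j" .
  moreover have "(k + 2) mod 4 = N mod 4 \<longleftrightarrow> odd j"
  proof
    assume "(k + 2) mod 4 = N mod 4"
    then obtain q1 q2 where "k + 2 + 4 * q1 = N + 4 * q2" using nat_mod_eq_iff by metis
    with j show "odd j" by presburger
  next
    assume "odd j"
    then obtain r where "j = 2 * r + 1" by (rule oddE)
    with j have "k + 2 + 4 * r = N + 4 * k" by linarith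
    then show "(k + 2) mod 4 = N mod 4" unfolding nat_mod_eq_iff by blast
  qed
  ultimately show ?thesis by (simp add: minus_one_power_iff)
qed

lemma weight_enum_substitution_difference:
  fixes s a b :: complex
  assumes "semi_self_dual n C" "n = 2 * N" "s * s = 2"
  defines "x \<equiv> (a + b) / s" and "y \<equiv> \<i> * (a - b) / s"
  shows "weight_enum n C x y - weight_enum n C ((x + y) / s) ((x - y) / s) =
    weight_enum n {v \<in> shadow n C. (card v + 2) mod 4 = N mod 4} a b"
proof -
  have lin: "binary_linear_code n C" and orth: "C \<subseteq> dual_code n C" and full: "{..<n} \<in> C"
    using assms(1) unfolding semi_self_dual_def by auto
  then have C: "C \<subseteq> Pow {..<n}" unfolding binary_linear_code_def by auto
  have even_card: "\<forall>c\<in>C. even (card c)" using self_orthogonal_even_card[OF orth] by blast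
  define \<chi> where "\<chi> v = (\<Sum>c\<in>C. \<i> ^ card c * (-1) ^ card (v \<inter> c))" for v
  define V where "V = {v \<in> shadow n C. (card v + 2) mod 4 = N mod 4}"
  have V: "V \<subseteq> Pow {..<n}" unfolding V_def shadow_def by auto
  have coeff: "\<chi> v * (1 - \<i> ^ N * (- \<i>) ^ card v) = (if v \<in> V then 2 ^ N else 0)"
    if v: "v \<subseteq> {..<n}" for v
  proof (cases "v \<in> shadow n C")
    case True
    with full v have "even (N + card v)"
      unfolding shadow_def using assms(2) by (auto simp: Int_absorb2)
    moreover have "\<chi> v = of_nat (card C)"
      using True shadow_character_sum[OF lin orth v] unfolding \<chi>_def by simp
    moreover have "2 * of_nat (card C) = (2::complex) ^ N"
      using semi_self_dual_card[OF assms(1,2)] by (metis of_nat_mult of_nat_numeral of_nat_power)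
    ultimately show ?thesis
      using True unfolding V_def by (simp add: one_minus_power_i mult.commute)
  next
    case False
    then show ?thesis
      using shadow_character_sum[OF lin orth v] unfolding \<chi>_def V_def by simp
  qed
  have "weight_enum n C x y - weight_enum n C ((x + y) / s) ((x - y) / s) =
      ((\<Sum>v\<in>Pow {..<n}. a ^ (n - card v) * b ^ card v * \<chi> v) -
       \<i> ^ N * (\<Sum>v\<in>Pow {..<n}. a ^ (n - card v) * (- \<i> * b) ^ card v * \<chi> v)) / 2 ^ N"
    unfolding x_def y_def weight_enum_first_substitution[OF assms(3,2) C]
      weight_enum_second_substitution[OF assms(3,2) C even_card] \<chi>_def
    by (simp only: diff_divide_distrib)
  also have "\<dots> = (\<Sum>v\<in>Pow {..<n}. a ^ (n - card v) * b ^ card v *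
      (\<chi> v * (1 - \<i> ^ N * (- \<i>) ^ card v))) / 2 ^ N"
    unfolding sum_distrib_left sum_subtractf[symmetric]
    by (intro arg_cong[where f = "\<lambda>z. z / 2 ^ N"] sum.cong refl)
      (simp only: power_mult_distrib, simp add: algebra_simps)
  also have "\<dots> = (\<Sum>v\<in>Pow {..<n}. if v \<in> V then 2 ^ N * (a ^ (n - card v) * b ^ card v) else 0) / 2 ^ N"
    by (intro arg_cong[where f = "\<lambda>z. z / 2 ^ N"] sum.cong refl) (auto simp: coeff)
  also have "\<dots> = (\<Sum>v\<in>V. a ^ (n - card v) * b ^ card v)"
    using V by (simp add: sum.If_cases Int_absorb1 flip: sum_distrib_left)
  finally show ?thesis unfolding weight_enum_def V_def .
qed

definition nat_binary_form :: "nat \<Rightarrow> ('a::comm_semiring_1 \<Rightarrow> 'a \<Rightarrow> 'a) \<Rightarrow> bool" where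
  "nat_binary_form l F \<longleftrightarrow>
     (\<exists>h::nat \<Rightarrow> nat. \<forall>r t. F r t = (\<Sum>i\<le>l. of_nat (h i) * r ^ (l - i) * t ^ i))"

lemma nat_binary_form_mult_left:
  assumes "nat_binary_form l F"
  shows "nat_binary_form (Suc l) (\<lambda>r t. r * F r t)"
proof -
  obtain h where h: "\<And>r t. F r t = (\<Sum>i\<le>l. of_nat (h i) * r ^ (l - i) * t ^ i)"
    using assms unfolding nat_binary_form_def by blast
  have "r * F r t = (\<Sum>i\<le>Suc l. of_nat ((h(Suc l := 0)) i) * r ^ (Suc l - i) * t ^ i)" for r t
    unfolding h sum_distrib_left by (auto intro!: sum.cong simp: Suc_diff_le mult_ac)
  then show ?thesis unfolding nat_binary_form_def by blast
qed

lemma nat_binary_form_mult_right: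
  assumes "nat_binary_form l F"
  shows "nat_binary_form (Suc l) (\<lambda>r t. t * F r t)"
proof -
  obtain h where h: "\<And>r t. F r t = (\<Sum>i\<le>l. of_nat (h i) * r ^ (l - i) * t ^ i)"
    using assms unfolding nat_binary_form_def by blast
  have "t * F r t = (\<Sum>i\<le>Suc l. of_nat (case i of 0 \<Rightarrow> 0 | Suc j \<Rightarrow> h j) * r ^ (Suc l - i) * t ^ i)"
    for r t
    unfolding h sum_distrib_left sum.atMost_Suc_shift by (auto intro!: sum.cong simp: mult_ac)
  then show ?thesis unfolding nat_binary_form_def by blast
qed

lemma nat_binary_form_add:
  assumes "nat_binary_form l F" "nat_binary_form l G"
  shows "nat_binary_form l (\<lambda>r t. F r t + G r t)"
proof -
  obtain h where h: "\<And>r t. F r t = (\<Sum>i\<le>l. of_nat (h i) * r ^ (l - i) * t ^ i)"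
    using assms(1) unfolding nat_binary_form_def by blast
  obtain g where g: "\<And>r t. G r t = (\<Sum>i\<le>l. of_nat (g i) * r ^ (l - i) * t ^ i)"
    using assms(2) unfolding nat_binary_form_def by blast
  have "F r t + G r t = (\<Sum>i\<le>l. of_nat (h i + g i) * r ^ (l - i) * t ^ i)" for r t
    unfolding h g sum.distrib[symmetric] by (simp add: algebra_simps)
  then show ?thesis unfolding nat_binary_form_def by (intro exI[of _ "\<lambda>i. h i + g i"]) blast
qed

(* With p = x * y and t = (x - y)^2 the two components are
   (x^(2l+1) + y^(2l+1)) / (x + y)  and  (x^(2l+2) - y^(2l+2)) / (x^2 - y^2),
   see power_quotients_eq; the recursion shows their coefficients are natural numbers. *)
fun power_quotients :: "nat \<Rightarrow> 'a::comm_semiring_1 \<Rightarrow> 'a \<Rightarrow> 'a \<times> 'a" where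
  "power_quotients 0 p t = (1, 1)"
| "power_quotients (Suc l) p t =
    (let (f, g) = power_quotients l p t; f' = p * f + t * g in (f', p * g + f'))"

lemma power_quotients_eq:
  fixes x y :: "'a::comm_ring_1"
  shows "(x + y) * fst (power_quotients l (x * y) ((x - y)^2)) = x ^ (2 * l + 1) + y ^ (2 * l + 1) \<and>
    (x + y) * (x - y) * snd (power_quotients l (x * y) ((x - y)^2)) = x ^ (2 * l + 2) - y ^ (2 * l + 2)"
proof (induction l)
  case 0
  show ?case by (simp add: algebra_simps power2_eq_square)
next
  case (Suc l)
  obtain f g where fg: "power_quotients l (x * y) ((x - y)^2) = (f, g)" by fastforce
  with Suc have f: "(x + y) * f = x ^ (2 * l + 1) + y ^ (2 * l + 1)"
    and g: "(x + y) * (x - y) * g = x ^ (2 * l + 2) - y ^ (2 * l + 2)" by simp_all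
  have f': "(x + y) * (x * y * f + (x - y)^2 * g) = x ^ (2 * Suc l + 1) + y ^ (2 * Suc l + 1)"
  proof -
    have "(x + y) * (x * y * f + (x - y)^2 * g) = x * y * ((x + y) * f) + (x - y) * ((x + y) * (x - y) * g)"
      by (simp add: algebra_simps power2_eq_square)
    then show ?thesis unfolding f g by (simp add: algebra_simps)
  qed
  have "(x + y) * (x - y) * (x * y * g + (x * y * f + (x - y)^2 * g)) =
      x * y * ((x + y) * (x - y) * g) + (x - y) * ((x + y) * (x * y * f + (x - y)^2 * g))"
    by (simp add: algebra_simps)
  then have "(x + y) * (x - y) * (x * y * g + (x * y * f + (x - y)^2 * g)) =
      x ^ (2 * Suc l + 2) - y ^ (2 * Suc l + 2)"
    unfolding f' g by (simp add: algebra_simps)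
  with f' fg show ?case by (simp add: Let_def)
qed

lemma nat_binary_form_power_quotients:
  "nat_binary_form l (\<lambda>p (t::'a::comm_semiring_1). fst (power_quotients l p t)) \<and>
   nat_binary_form l (\<lambda>p (t::'a). snd (power_quotients l p t))"
proof (induction l)
  case 0
  show ?case unfolding nat_binary_form_def by (intro conjI exI[of _ "\<lambda>_. 1"]) simp_all
next
  case (Suc l)
  note f = Suc.IH[THEN conjunct1] and g = Suc.IH[THEN conjunct2]
  have f': "nat_binary_form (Suc l) (\<lambda>p (t::'a). fst (power_quotients (Suc l) p t))"
    using nat_binary_form_add[OF nat_binary_form_mult_left[OF f] nat_binary_form_mult_right[OF g]]
    by (simp add: case_prod_beta Let_def)
  have "nat_binary_form (Suc l) (\<lambda>p (t::'a). snd (power_quotients (Suc l) p t))"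
    using nat_binary_form_add[OF nat_binary_form_mult_left[OF g] f']
    by (simp add: case_prod_beta Let_def)
  with f' show ?case by blast
qed

(* The basis of the theorem read in the coordinates x = (a + b)/\<surd>2, y = \<i>(a - b)/\<surd>2,
   up to the factor (-1)^i 2^(N-1-6i), see invariant_basis_substitution. *)
definition invariant_basis :: "nat \<Rightarrow> nat \<Rightarrow> 'a::comm_ring_1 \<Rightarrow> 'a \<Rightarrow> 'a" where
  "invariant_basis N i a b = (a^4 + b^4) * (a * b) ^ (N - 2 - 4 * i) * (a^4 - b^4) ^ (2 * i)"

definition nat_combination :: "nat \<Rightarrow> nat \<Rightarrow> ('a::comm_ring_1 \<Rightarrow> 'a \<Rightarrow> 'a) \<Rightarrow> bool" where
  "nat_combination N m G \<longleftrightarrow>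
     (\<exists>f::nat \<Rightarrow> nat. \<forall>a b. G a b = (\<Sum>i\<le>m. of_nat (f i) * invariant_basis N i a b))"

lemma nat_combination_sum:
  assumes "finite S" "\<And>v. v \<in> S \<Longrightarrow> nat_combination N m (G v)"
  shows "nat_combination N m (\<lambda>a b. \<Sum>v\<in>S. G v a b)"
  using assms
proof (induction S rule: finite_induct)
  case empty
  show ?case unfolding nat_combination_def by (rule exI[of _ "\<lambda>_. 0"]) simp
next
  case (insert v S)
  obtain f where f: "\<And>a b. G v a b = (\<Sum>i\<le>m. of_nat (f i) * invariant_basis N i a b)"
    using insert.prems unfolding nat_combination_def by blast
  obtain g where g: "\<And>a b. (\<Sum>v\<in>S. G v a b) = (\<Sum>i\<le>m. of_nat (g i) * invariant_basis N i a b)"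
    using insert unfolding nat_combination_def by blast
  have "(\<Sum>v\<in>insert v S. G v a b) = (\<Sum>i\<le>m. of_nat (f i + g i) * invariant_basis N i a b)" for a b
    using insert(1,2) by (simp add: f g sum.distrib algebra_simps)
  then show ?case unfolding nat_combination_def by (intro exI[of _ "\<lambda>i. f i + g i"]) blast
qed

lemma nat_combination_complementary_monomials:
  assumes "w + 4 * l + 2 = N" "l \<le> m"
  shows "nat_combination N m (\<lambda>a b. a ^ (2 * N - w) * b ^ w + a ^ w * b ^ (2 * N - w))"
proof -
  obtain h where h: "\<And>p t :: 'a. fst (power_quotients l p t) = (\<Sum>i\<le>l. of_nat (h i) * p ^ (l - i) * t ^ i)"
    using nat_binary_form_power_quotients unfolding nat_binary_form_def by blast
  have "a ^ (2 * N - w) * b ^ w + a ^ w * b ^ (2 * N - w) =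
      (\<Sum>i\<le>m. of_nat (if i \<le> l then h i else 0) * invariant_basis N i a b)" for a b :: 'a
  proof -
    have "2 * N - w = w + 4 * (2 * l + 1)" using assms(1) by simp
    then have "a ^ (2 * N - w) = a ^ w * (a^4) ^ (2 * l + 1)" "b ^ (2 * N - w) = b ^ w * (b^4) ^ (2 * l + 1)"
      by (simp_all only: power_add power_mult)
    then have "a ^ (2 * N - w) * b ^ w + a ^ w * b ^ (2 * N - w) =
        (a * b) ^ w * ((a^4) ^ (2 * l + 1) + (b^4) ^ (2 * l + 1))"
      by (simp add: power_mult_distrib algebra_simps)
    also have "\<dots> = (a * b) ^ w * ((a^4 + b^4) * fst (power_quotients l (a^4 * b^4) ((a^4 - b^4)^2)))"
      using power_quotients_eq[of "a^4" "b^4" l] by simp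
    also have "\<dots> = (\<Sum>i\<le>l. of_nat (h i) * invariant_basis N i a b)"
      unfolding h sum_distrib_left
    proof (intro sum.cong refl)
      fix i assume "i \<in> {..l}"
      then have "N - 2 - 4 * i = w + 4 * (l - i)" using assms(1) by simp
      then have e: "(a * b) ^ w * (a^4 * b^4) ^ (l - i) = (a * b) ^ (N - 2 - 4 * i)"
        by (simp add: power_add power_mult power_mult_distrib)
      have "(a * b) ^ w * ((a^4 + b^4) * (of_nat (h i) * (a^4 * b^4) ^ (l - i) * ((a^4 - b^4)^2) ^ i)) =
          of_nat (h i) * ((a^4 + b^4) * ((a * b) ^ w * (a^4 * b^4) ^ (l - i)) * (a^4 - b^4) ^ (2 * i))"
        by (simp only: power_mult) (simp only: mult_ac)
      then show "(a * b) ^ w * ((a^4 + b^4) * (of_nat (h i) * (a^4 * b^4) ^ (l - i) * ((a^4 - b^4)^2) ^ i)) =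
          of_nat (h i) * invariant_basis N i a b"
        unfolding e invariant_basis_def .
    qed
    also have "\<dots> = (\<Sum>i\<le>m. of_nat (if i \<le> l then h i else 0) * invariant_basis N i a b)"
      using assms(2) by (intro sum.mono_neutral_cong_left) auto
    finally show ?thesis .
  qed
  then show ?thesis
    unfolding nat_combination_def by (intro exI[of _ "\<lambda>i. if i \<le> l then h i else 0"]) blast
qed

lemma nat_combination_weight_enum:
  assumes "n = 2 * N" "V \<subseteq> Pow {..<n}" "\<And>v. v \<in> V \<Longrightarrow> {..<n} - v \<in> V"
    and weights: "\<And>v. v \<in> V \<Longrightarrow> (card v + 2) mod 4 = N mod 4"
  shows "nat_combination N ((N - 2) div 4) (weight_enum n V)"
proof -
  define V1 where "V1 = {v \<in> V. 2 * card v < n}"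
  define G where "G v a b = a ^ (2 * N - card v) * b ^ card v + a ^ card v * b ^ (2 * N - card v)"
    for v :: "nat set" and a b :: complex
  have "card v \<noteq> N" if v: "v \<in> V" for v
  proof
    assume "card v = N"
    then obtain q1 q2 where "N + 2 + 4 * q1 = N + 4 * q2"
      using weights[OF v] nat_mod_eq_iff by metis
    then show False by presburger
  qed
  then have "\<And>v. v \<in> V \<Longrightarrow> 2 * card v \<noteq> card {..<n}" using assms(1) by simp
  from sum_complement_pairs[OF _ assms(2,3) this]
  have "weight_enum n V a b = (\<Sum>v\<in>V1. a ^ (n - card v) * b ^ card v +
      a ^ (n - card ({..<n} - v)) * b ^ card ({..<n} - v))" for a b
    unfolding weight_enum_def V1_def by simp
  also have "\<dots> a b = (\<Sum>v\<in>V1. G v a b)" for a b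
  proof (intro sum.cong refl)
    fix v assume "v \<in> V1"
    then have "v \<subseteq> {..<n}" using assms(2) unfolding V1_def by auto
    then have "card ({..<n} - v) = n - card v" "card v \<le> n"
      using card_mono[of "{..<n}" v] by (simp_all add: card_Diff_subset finite_subset)
    then show "a ^ (n - card v) * b ^ card v + a ^ (n - card ({..<n} - v)) * b ^ card ({..<n} - v) =
        G v a b" unfolding G_def assms(1) by simp
  qed
  finally have "weight_enum n V = (\<lambda>a b. \<Sum>v\<in>V1. G v a b)" by blast
  moreover have "nat_combination N ((N - 2) div 4) (G v)" if "v \<in> V1" for v
  proof -
    have "card v < N" "(card v + 2) mod 4 = N mod 4"
      using that weights assms(1) unfolding V1_def by auto
    then obtain q1 q2 where "card v + 2 + 4 * q1 = N + 4 * q2"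
      using nat_mod_eq_iff by metis
    with \<open>card v < N\<close> have l: "card v + 4 * (q1 - q2) + 2 = N" by presburger
    then have "q1 - q2 \<le> (N - 2) div 4" using div_le_mono[of "4 * (q1 - q2)" "N - 2" 4] by simp
    with l show ?thesis unfolding G_def by (rule nat_combination_complementary_monomials)
  qed
  moreover have "finite V1"
    using assms(2) finite_subset[of V1 "Pow {..<n}"] unfolding V1_def by auto
  ultimately show ?thesis
    using nat_combination_sum[of V1 N "(N - 2) div 4" G] by simp
qed

lemma nat_combination_shadow_weight_enum:
  assumes "semi_self_dual n C" "n = 2 * N"
  shows "nat_combination N ((N - 2) div 4)
    (weight_enum n {v \<in> shadow n C. (card v + 2) mod 4 = N mod 4})"
proof (rule nat_combination_weight_enum[OF assms(2)])
  have C: "C \<subseteq> Pow {..<n}" and orth: "C \<subseteq> dual_code n C"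
    using assms(1) unfolding semi_self_dual_def binary_linear_code_def by auto
  note even_card = self_orthogonal_even_card[OF orth]
  fix v assume v: "v \<in> {v \<in> shadow n C. (card v + 2) mod 4 = N mod 4}"
  then have "v \<subseteq> {..<n}" unfolding shadow_def by auto
  then have "card v + card ({..<n} - v) = 2 * N"
    using card_mono[of "{..<n}" v] assms(2) by (simp add: card_Diff_subset finite_subset)
  with v have "(card ({..<n} - v) + 2) mod 4 = N mod 4"
    using complement_weight_mod_4 by auto
  moreover have "{..<n} - v \<in> shadow n C"
    using shadow_complement[OF C even_card] v by blast
  ultimately show "{..<n} - v \<in> {v \<in> shadow n C. (card v + 2) mod 4 = N mod 4}" by simp
qed (auto simp: shadow_def)

lemma invariant_basis_fourth_root:
  fixes a q z :: complex
  assumes "a ^ 4 = q" "(q - 1)^2 = z * q" "i \<le> m" "4 * m + 2 \<le> N"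
  shows "invariant_basis N i a 1 = (q + 1) * a ^ (N - 2 - 4 * m) * q ^ m * z ^ i"
proof -
  have "N - 2 - 4 * i = (N - 2 - 4 * m) + 4 * (m - i)" using assms(3,4) by simp
  then have "a ^ (N - 2 - 4 * i) = a ^ (N - 2 - 4 * m) * q ^ (m - i)"
    using assms(1) by (simp add: power_add power_mult)
  moreover have "(a ^ 4 - 1) ^ (2 * i) = (z * q) ^ i" using assms(1,2) by (simp add: power_mult)
  ultimately have "invariant_basis N i a 1 = (q + 1) * (a ^ (N - 2 - 4 * m) * q ^ (m - i)) * (z * q) ^ i"
    unfolding invariant_basis_def using assms(1) by simp
  also have "\<dots> = (q + 1) * a ^ (N - 2 - 4 * m) * (q ^ (m - i) * q ^ i) * z ^ i"
    by (simp only: power_mult_distrib mult_ac)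
  also have "q ^ (m - i) * q ^ i = q ^ m" using assms(3) by (simp flip: power_add)
  finally show ?thesis .
qed

lemma quadratic_root_exists:
  fixes z :: complex
  obtains q where "(q - 1)^2 = z * q" "q \<noteq> 0"
proof
  define r where "r = csqrt ((2 + z)^2 - 4)"
  define q where "q = ((2 + z) + r) / 2"
  have "q^2 - (2 + z) * q + 1 = (r^2 - ((2 + z)^2 - 4)) / 4"
    unfolding q_def by (simp add: field_simps power2_eq_square)
  then have "q^2 - (2 + z) * q + 1 = 0" unfolding r_def by simp
  then show "(q - 1)^2 = z * q" "q \<noteq> 0"
    by (auto simp: power2_eq_square algebra_simps)
qed

(* Every z \<noteq> -4 is (q - 1)^2/q for some q = a^4 with q \<noteq> 0, -1; evaluating at (a, 1) turns
   the hypothesis into infinitely many roots of a polynomial of degree at most m. *)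
lemma sum_invariant_basis_eq_iff:
  fixes d d' :: "nat \<Rightarrow> complex"
  assumes "4 * m + 2 \<le> N"
  shows "(\<forall>a b. (\<Sum>i\<le>m. d i * invariant_basis N i a b) = (\<Sum>i\<le>m. d' i * invariant_basis N i a b))
    \<longleftrightarrow> (\<forall>i\<le>m. d i = d' i)"
proof
  assume eq: "\<forall>a b. (\<Sum>i\<le>m. d i * invariant_basis N i a b) = (\<Sum>i\<le>m. d' i * invariant_basis N i a b)"
  have root: "(\<Sum>i\<le>m. (d i - d' i) * z ^ i) = 0" if "z \<noteq> -4" for z
  proof -
    obtain q where q: "(q - 1)^2 = z * q" "q \<noteq> 0" by (rule quadratic_root_exists)
    have "q + 1 \<noteq> 0"
    proof
      assume "q + 1 = 0"
      with q(1) have "z = -4" unfolding power2_eq_square by algebra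
      with that show False ..
    qed
    define a where "a = csqrt (csqrt q)"
    have "a ^ 4 = (a ^ 2) ^ 2" by (simp flip: power_mult)
    then have a: "a ^ 4 = q" unfolding a_def by simp
    have "0 = (\<Sum>i\<le>m. (d i - d' i) * invariant_basis N i a 1)"
      using eq by (simp add: sum_subtractf left_diff_distrib)
    also have "\<dots> = (q + 1) * a ^ (N - 2 - 4 * m) * q ^ m * (\<Sum>i\<le>m. (d i - d' i) * z ^ i)"
      using invariant_basis_fourth_root[OF a q(1) _ assms]
      by (simp add: sum_distrib_left mult_ac)
    finally show ?thesis
      using q(2) \<open>q + 1 \<noteq> 0\<close> a by auto
  qed
  show "\<forall>i\<le>m. d i = d' i"
  proof (rule ccontr)
    assume "\<not> (\<forall>i\<le>m. d i = d' i)"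
    then have "finite {z. (\<Sum>i\<le>m. (d i - d' i) * z ^ i) = 0}"
      by (auto simp: polyfun_finite_roots)
    moreover have "UNIV - {-4} \<subseteq> {z. (\<Sum>i\<le>m. (d i - d' i) * z ^ i) = 0}"
      using root by auto
    ultimately have "finite (UNIV :: complex set)"
      by (metis finite_Diff2 finite_subset finite.emptyI finite_insert)
    then show False by (simp add: infinite_UNIV_char_0)
  qed
qed simp

lemma invariant_basis_substitution:
  fixes s a b :: complex
  assumes "s * s = 2" "4 * i + 2 \<le> N"
  defines "x \<equiv> (a + b) / s" and "y \<equiv> \<i> * (a - b) / s"
  shows "(x^4 - 6 * x^2 * y^2 + y^4) * ((x^2 + y^2) ^ (N - 2 - 4 * i) * (x^2 * y^2 * (x^2 - y^2)^2) ^ i) =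
    (-1) ^ i * 2 powi (int N - 1 - 6 * int i) * invariant_basis N i a b"
proof -
  define k where "k = N - 2 - 4 * i"
  have x2: "x^2 = (a + b)^2 / 2" and y2: "y^2 = - ((a - b)^2) / 2"
    unfolding x_def y_def power_divide power2_eq_square[of s] assms(1)
    by (simp_all add: power_mult_distrib)
  have "x^4 = (x^2)^2" "y^4 = (y^2)^2" by (simp_all flip: power_mult)
  then have Q: "x^4 - 6 * x^2 * y^2 + y^4 = 2 * (a^4 + b^4)"
    unfolding x2 y2 by (simp add: field_simps power2_eq_square power4_eq_xxxx)
  have p: "x^2 + y^2 = 2 * (a * b)"
    unfolding x2 y2 by (simp add: field_simps power2_eq_square)
  have g: "x^2 * y^2 * (x^2 - y^2)^2 = (-1) * ((a^4 - b^4)^2 / 4)"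
    unfolding x2 y2 by (simp add: field_simps power2_eq_square power4_eq_xxxx)
  have powi: "(2::complex) powi (int N - 1 - 6 * int i) = 2 ^ (k + 1) / 4 ^ i"
  proof -
    have exponent: "int N - 1 - 6 * int i = int (k + 1) + (- int (2 * i))"
      unfolding k_def using assms(2) by simp
    have "(2::complex) powi (int N - 1 - 6 * int i) = 2 powi int (k + 1) * 2 powi (- int (2 * i))"
      unfolding exponent by (rule power_int_add) simp
    also have "\<dots> = 2 ^ (k + 1) / 2 ^ (2 * i)"
      by (simp only: power_int_minus power_int_of_nat divide_inverse)
    also have "(2::complex) ^ (2 * i) = 4 ^ i" by (simp add: power_mult)
    finally show ?thesis .
  qed
  have "(x^4 - 6 * x^2 * y^2 + y^4) * ((x^2 + y^2) ^ k * (x^2 * y^2 * (x^2 - y^2)^2) ^ i) =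
      2 * (a^4 + b^4) * (2 ^ k * (a * b) ^ k * ((-1) ^ i * ((a^4 - b^4) ^ (2 * i) / 4 ^ i)))"
    unfolding Q p g by (simp only: power_mult_distrib power_divide power_mult)
  also have "\<dots> = (-1) ^ i * (2 ^ (k + 1) / 4 ^ i) * ((a^4 + b^4) * (a * b) ^ k * (a^4 - b^4) ^ (2 * i))"
    by (simp add: field_simps)
  finally show ?thesis
    unfolding powi invariant_basis_def k_def .
qed

lemma sum_invariant_basis_substitution:
  fixes s a b :: complex and e :: "nat \<Rightarrow> complex"
  assumes "s * s = 2" "4 * m + 2 \<le> N"
  defines "x \<equiv> (a + b) / s" and "y \<equiv> \<i> * (a - b) / s"
  shows "(x^4 - 6 * x^2 * y^2 + y^4) *
      (\<Sum>i\<le>m. e i * (x^2 + y^2) ^ (N - 2 - 4 * i) * (x^2 * y^2 * (x^2 - y^2)^2) ^ i) =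
    (\<Sum>i\<le>m. ((-1) ^ i * 2 powi (int N - 1 - 6 * int i) * e i) * invariant_basis N i a b)"
  unfolding sum_distrib_left
proof (intro sum.cong refl)
  fix i assume "i \<in> {..m}"
  then have "4 * i + 2 \<le> N" using assms(2) by simp
  from invariant_basis_substitution[OF assms(1) this, of a b]
  show "(x^4 - 6 * x^2 * y^2 + y^4) * (e i * (x^2 + y^2) ^ (N - 2 - 4 * i) * (x^2 * y^2 * (x^2 - y^2)^2) ^ i) =
      (-1) ^ i * 2 powi (int N - 1 - 6 * int i) * e i * invariant_basis N i a b"
    unfolding x_def y_def by (simp only: mult_ac)
qed

lemma all_substitution_iff:
  fixes s :: complex
  assumes "s * s = 2"
  shows "(\<forall>x y. P x y) \<longleftrightarrow> (\<forall>a b. P ((a + b) / s) (\<i> * (a - b) / s))"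
proof (intro iffI allI)
  fix x y
  assume "\<forall>a b. P ((a + b) / s) (\<i> * (a - b) / s)"
  then have "P (((x - \<i> * y) / s + (x + \<i> * y) / s) / s) (\<i> * ((x - \<i> * y) / s - (x + \<i> * y) / s) / s)"
    by blast
  moreover have "((x - \<i> * y) / s + (x + \<i> * y) / s) / s = ((x - \<i> * y) + (x + \<i> * y)) / (s * s)"
    "\<i> * ((x - \<i> * y) / s - (x + \<i> * y) / s) / s = \<i> * ((x - \<i> * y) - (x + \<i> * y)) / (s * s)"
    by (simp_all add: add_divide_distrib diff_divide_distrib)
  ultimately show "P x y" unfolding assms by (simp add: algebra_simps)
qed simp

lemma expansion_iff_invariant_basis_coefficients:
  fixes s :: complex and F :: "complex \<Rightarrow> complex \<Rightarrow> complex" and e :: "nat \<Rightarrow> complex"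
  assumes "s * s = 2" "4 * m + 2 \<le> N"
    and F: "\<And>a b. F ((a + b) / s) (\<i> * (a - b) / s) = (\<Sum>i\<le>m. of_nat (f i) * invariant_basis N i a b)"
  shows "(\<forall>x y. F x y = (x^4 - 6 * x^2 * y^2 + y^4) *
      (\<Sum>i\<le>m. e i * (x^2 + y^2) ^ (N - 2 - 4 * i) * (x^2 * y^2 * (x^2 - y^2)^2) ^ i)) \<longleftrightarrow>
    (\<forall>i\<le>m. of_nat (f i) = (-1) ^ i * 2 powi (int N - 1 - 6 * int i) * e i)"
proof -
  have "(\<forall>x y. F x y = (x^4 - 6 * x^2 * y^2 + y^4) *
      (\<Sum>i\<le>m. e i * (x^2 + y^2) ^ (N - 2 - 4 * i) * (x^2 * y^2 * (x^2 - y^2)^2) ^ i)) \<longleftrightarrow>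
    (\<forall>a b. (\<Sum>i\<le>m. of_nat (f i) * invariant_basis N i a b) =
      (\<Sum>i\<le>m. ((-1) ^ i * 2 powi (int N - 1 - 6 * int i) * e i) * invariant_basis N i a b))"
    by (subst all_substitution_iff[OF assms(1)]) (simp only: F sum_invariant_basis_substitution[OF assms(1,2)])
  also have "\<dots> \<longleftrightarrow> (\<forall>i\<le>m. of_nat (f i) = (-1) ^ i * 2 powi (int N - 1 - 6 * int i) * e i)"
    by (rule sum_invariant_basis_eq_iff[OF assms(2)])
  finally show ?thesis .
qed

theorem corollary5p1:
  fixes n :: nat and C :: "nat set set"
  assumes "even n" and "n \<ge> 4"
    and "semi_self_dual n C" and "\<not> doubly_even C"
  defines "N \<equiv> n div 2"
    and "A \<equiv> weight_enum n C"
  defines "D \<equiv> (\<lambda>x y. A ((x + y) / complex_of_real (sqrt 2)) ((x - y) / complex_of_real (sqrt 2)))"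
    and "m \<equiv> (N - 2) div 4"
  defines "B \<equiv> (\<lambda>x y. A x y - D x y)"
  defines "P \<equiv> (\<lambda>e::nat \<Rightarrow> complex. (\<forall>i>m. e i = 0) \<and>
       (\<forall>x y. B x y = (x^4 - 6 * x^2 * y^2 + y^4) *
          (\<Sum>i\<le>m. e i * (x^2 + y^2) ^ (N - 2 - 4 * i) * (x^2 * y^2 * (x^2 - y^2)^2) ^ i)))"
  shows "(\<exists>!e. P e) \<and>
    (\<forall>e. P e \<longrightarrow> (\<forall>i\<le>m. \<exists>k::nat.
        (-1) ^ i * (2::complex) powi (int N - 1 - 6 * int i) * e i = of_nat k))"
proof -
  define s where "s = complex_of_real (sqrt 2)"
  have s: "s * s = 2" unfolding s_def by (simp flip: of_real_mult)
  have n: "n = 2 * N" using assms(1) unfolding N_def by simp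
  have m: "4 * m + 2 \<le> N"
    using div_times_less_eq_dividend[of "N - 2" 4] assms(2) n unfolding m_def by linarith
  define c where "c i = (-1) ^ i * (2::complex) powi (int N - 1 - 6 * int i)" for i
  have B: "B x y = weight_enum n C x y - weight_enum n C ((x + y) / s) ((x - y) / s)" for x y
    unfolding B_def D_def A_def s_def ..
  have "nat_combination N m (\<lambda>a b. B ((a + b) / s) (\<i> * (a - b) / s))"
    unfolding B weight_enum_substitution_difference[OF assms(3) n s] m_def
    by (rule nat_combination_shadow_weight_enum[OF assms(3) n])
  then obtain f :: "nat \<Rightarrow> nat" where
    f: "\<And>a b. B ((a + b) / s) (\<i> * (a - b) / s) = (\<Sum>i\<le>m. of_nat (f i) * invariant_basis N i a b)"
    unfolding nat_combination_def by blast
  have P_iff: "P e \<longleftrightarrow> (\<forall>i>m. e i = 0) \<and> (\<forall>i\<le>m. of_nat (f i) = c i * e i)" for e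
    unfolding P_def c_def expansion_iff_invariant_basis_coefficients[OF s m f] ..
  have "c i \<noteq> 0" for i unfolding c_def by simp
  then have "P e \<longleftrightarrow> e = (\<lambda>i. if i \<le> m then of_nat (f i) / c i else 0)" for e
    unfolding P_iff by (auto simp: field_simps)
  then have "\<exists>!e. P e" by simp
  moreover have "c i * e i = of_nat (f i)" if "P e" "i \<le> m" for e i
    using that unfolding P_iff by simp
  ultimately show ?thesis
    unfolding c_def by blast
qed

end
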